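(* For every rectangle $R \subset \mathbb{R}^2$, $$\textup{Var}\Big( \mathbb{P}\big( H_R \,|\, \eta \big) \Big) \, \leqslant \, \sum_{m=1}^n \mathbb{E}\big[ \textup{Inf}_m( f_R^\eta )^2 \big].$$
   Context: Let $R$ be a rectangle with sides parallel to the axes, let $\eta = \{\eta_1,\ldots,\eta_n\}$ be $n$ points chosen independently and uniformly at random in $R$, and let $\omega \colon \eta \to \{-1,1\}$ be a uniformly random colouring. The Voronoi cell of $u \in \eta$ is $C(u) = \{ x \in R : \|u - x\|_2 \leqslant \|v - x\|_2 \ \forall v \in \eta\}$; it is red if $\omega(u)=1$ and blue if $\omega(u)=-1$. $H_R$ is the event that there is a path in $R$ from its left-hand side to its right-hand side intersecting only red cells, and $f_R^\eta \colon \{-1,1\}^\eta \to \{0,1\}$ is the indicator function of $H_R$ for the tiling given by $\eta$. The influence is $\textup{Inf}_m(f_R^\eta) = \mathbb{P}( f_R^\eta(\omega) \neq f_R^\eta(\omega') \,|\, \eta )$, where $\omega'$ equals $\omega$ except that the colour of $\eta_m$ is flipped. *)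

theory Defs
  imports "HOL-Probability.Probability"
begin

type_synonym point = "real \<times> real"

definition rect :: "real \<Rightarrow> real \<Rightarrow> real \<Rightarrow> real \<Rightarrow> point set" where
  "rect a b c d = {a..b} \<times> {c..d}"

text \<open>Voronoi cell (within R) of the m-th point of the configuration eta (n points
  eta 0, ..., eta (n-1)); the norm on real * real is the Euclidean norm.\<close>
definition voronoi_cell :: "point set \<Rightarrow> nat \<Rightarrow> (nat \<Rightarrow> point) \<Rightarrow> nat \<Rightarrow> point set" where
  "voronoi_cell R n eta m = {x \<in> R. \<forall>v<n. norm (eta m - x) \<le> norm (eta v - x)}"

text \<open>Colourings: omega i \<in> {-1,1} for i < n (1 = red, -1 = blue).\<close>
definition colourings :: "nat \<Rightarrow> (nat \<Rightarrow> int) set" where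
  "colourings n = PiE {..<n} (\<lambda>_. {-1, 1})"

definition crossing :: "real \<Rightarrow> real \<Rightarrow> real \<Rightarrow> real \<Rightarrow> nat \<Rightarrow> (nat \<Rightarrow> point) \<Rightarrow> (nat \<Rightarrow> int) \<Rightarrow> bool" where
  "crossing a b c d n eta omega \<longleftrightarrow>
     (\<exists>\<gamma>. path \<gamma> \<and> path_image \<gamma> \<subseteq> rect a b c d \<and>
        pathstart \<gamma> \<in> {a} \<times> {c..d} \<and> pathfinish \<gamma> \<in> {b} \<times> {c..d} \<and>
        (\<forall>m<n. path_image \<gamma> \<inter> voronoi_cell (rect a b c d) n eta m \<noteq> {} \<longrightarrow> omega m = 1))"

definition fR :: "real \<Rightarrow> real \<Rightarrow> real \<Rightarrow> real \<Rightarrow> nat \<Rightarrow> (nat \<Rightarrow> point) \<Rightarrow> (nat \<Rightarrow> int) \<Rightarrow> real" where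
  "fR a b c d n eta omega = (if crossing a b c d n eta omega then 1 else 0)"

definition cond_prob_H :: "real \<Rightarrow> real \<Rightarrow> real \<Rightarrow> real \<Rightarrow> nat \<Rightarrow> (nat \<Rightarrow> point) \<Rightarrow> real" where
  "cond_prob_H a b c d n eta =
     (\<Sum>\<omega>\<in>colourings n. fR a b c d n eta \<omega>) / real (card (colourings n))"

definition flip :: "nat \<Rightarrow> (nat \<Rightarrow> int) \<Rightarrow> nat \<Rightarrow> int" where
  "flip m omega = omega(m := - omega m)"

definition influence :: "real \<Rightarrow> real \<Rightarrow> real \<Rightarrow> real \<Rightarrow> nat \<Rightarrow> nat \<Rightarrow> (nat \<Rightarrow> point) \<Rightarrow> real" where
  "influence a b c d n m eta =
     real (card {\<omega>\<in>colourings n. fR a b c d n eta \<omega> \<noteq> fR a b c d n eta (flip m \<omega>)})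
     / real (card (colourings n))"

definition point_measure :: "real \<Rightarrow> real \<Rightarrow> real \<Rightarrow> real \<Rightarrow> nat \<Rightarrow> (nat \<Rightarrow> point) measure" where
  "point_measure a b c d n = PiM {..<n} (\<lambda>_. uniform_measure lborel (rect a b c d))"

end

(* Conditioned on the points eta, the crossing probability is a bounded function of n independent
   uniform points, so the Efron-Stein inequality bounds its variance by the sum over m of
   E[(P(H | eta) - P(H' | eta))^2], where H' is the crossing event of the tiling with eta_m deleted,
   a quantity that does not depend on eta_m.  Deleting eta_m hands its cell over to its neighbours,
   so H' holds whenever H holds for both colours of eta_m and implies H for at least one of them.
   Pairing each colouring with the one where the colour of eta_m is flipped then gives
   |P(H | eta) - P(H' | eta)| <= Inf_m / 2.  Measurability holds because the crossing event is
   open in eta: a crossing path is compact, hence at positive distance from the blue cells. *)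

theory Submission
  imports Defs
begin

definition bounded_measurable :: "'a measure \<Rightarrow> ('a \<Rightarrow> real) \<Rightarrow> real \<Rightarrow> bool" where
  "bounded_measurable M f B \<longleftrightarrow> f \<in> borel_measurable M \<and> (\<forall>x\<in>space M. \<bar>f x\<bar> \<le> B)"

lemma bounded_measurable_integrable:
  assumes "finite_measure M" "bounded_measurable M f B"
  shows "integrable M f"
  using assms unfolding bounded_measurable_def
  by (intro finite_measure.integrable_const_bound[of M _ B]) auto

lemma bounded_measurable_square:
  assumes "bounded_measurable M f B"
  shows "bounded_measurable M (\<lambda>x. (f x)\<^sup>2) (B\<^sup>2)"
  unfolding bounded_measurable_def
proof (intro conjI ballI)
  show "(\<lambda>x. (f x)\<^sup>2) \<in> borel_measurable M"
    using assms unfolding bounded_measurable_def by (simp add: borel_measurable_power)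
  fix x assume "x \<in> space M"
  then have "\<bar>f x\<bar>\<^sup>2 \<le> B\<^sup>2"
    using assms unfolding bounded_measurable_def by (intro power_mono) auto
  then show "\<bar>(f x)\<^sup>2\<bar> \<le> B\<^sup>2" by simp
qed

lemma bounded_measurable_diff:
  assumes "bounded_measurable M f B" "bounded_measurable M g C"
  shows "bounded_measurable M (\<lambda>x. f x - g x) (B + C)"
  unfolding bounded_measurable_def
proof (intro conjI ballI)
  show "(\<lambda>x. f x - g x) \<in> borel_measurable M"
    using assms unfolding bounded_measurable_def by (simp add: borel_measurable_diff)
  fix x assume "x \<in> space M"
  then have "\<bar>f x\<bar> + \<bar>g x\<bar> \<le> B + C"
    using assms unfolding bounded_measurable_def by (intro add_mono) auto
  then show "\<bar>f x - g x\<bar> \<le> B + C" using abs_triangle_ineq4[of "f x" "g x"] by linarith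
qed

lemma bounded_measurable_diff_square:
  assumes "bounded_measurable M f B" "bounded_measurable M g B"
  shows "bounded_measurable M (\<lambda>x. (f x - g x)\<^sup>2) ((2 * B)\<^sup>2)"
  unfolding mult_2 by (rule bounded_measurable_square[OF bounded_measurable_diff[OF assms]])

lemma (in prob_space) abs_expectation_le_bound:
  assumes "bounded_measurable M f B"
  shows "\<bar>expectation f\<bar> \<le> B"
proof -
  have "integrable M f" using bounded_measurable_integrable[OF finite_measure_axioms assms] .
  moreover have "\<forall>x\<in>space M. -B \<le> f x \<and> f x \<le> B"
    using assms unfolding bounded_measurable_def by (auto simp: abs_le_iff)
  ultimately show ?thesis
    using integral_le_const[of f B] integral_ge_const[of f "-B"] by (auto simp: abs_le_iff)
qed

lemma (in prob_space) variance_le_square_deviation: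
  fixes Z :: "'a \<Rightarrow> real"
  assumes "integrable M Z" "integrable M (\<lambda>x. (Z x)\<^sup>2)"
  shows "variance Z \<le> expectation (\<lambda>x. (Z x - c)\<^sup>2)"
proof -
  have "expectation (\<lambda>x. (Z x - c)\<^sup>2) = expectation (\<lambda>x. (Z x)\<^sup>2) - 2 * c * expectation Z + c\<^sup>2"
    using assms by (simp add: power2_diff prob_space)
  also have "\<dots> = variance Z + (expectation Z - c)\<^sup>2"
    using variance_eq[OF assms] by (simp add: power2_diff)
  finally show ?thesis by simp
qed

lemma (in prob_space) square_expectation_le:
  fixes Z :: "'a \<Rightarrow> real"
  assumes "integrable M Z" "integrable M (\<lambda>x. (Z x)\<^sup>2)"
  shows "(expectation Z)\<^sup>2 \<le> expectation (\<lambda>x. (Z x)\<^sup>2)"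
  using variance_eq[OF assms] variance_positive[of Z] by simp

section \<open>The Efron-Stein inequality\<close>

context
  fixes M :: "'i \<Rightarrow> 'a measure"
  assumes prob_space_factor: "\<And>i. prob_space (M i)"
begin

interpretation product_sigma_finite M
  by (intro product_sigma_finite.intro) (simp add: prob_space_factor prob_space_imp_sigma_finite)

lemma prob_space_PiM_factors: "prob_space (PiM I M)"
  by (simp add: prob_space_PiM prob_space_factor)

lemma fun_upd_in_space_PiM_insert:
  "x \<in> space (PiM I M) \<Longrightarrow> y \<in> space (M i) \<Longrightarrow> x(i := y) \<in> space (PiM (insert i I) M)"
  by (auto simp: space_PiM PiE_def extensional_def Pi_def)

lemma measurable_fun_upd_section:
  assumes "i \<notin> I" "h \<in> borel_measurable (PiM (insert i I) M)"
  shows "(\<lambda>(x, y). h (x(i := y))) \<in> borel_measurable (PiM I M \<Otimes>\<^sub>M M i)"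
proof -
  have "(\<lambda>(x, y). x(i := y)) \<in> measurable (PiM I M \<Otimes>\<^sub>M M i) (PiM (insert i I) M)"
    using measurable_fun_upd[where J=I and I="insert i I" and i=i and M=M
        and N="PiM I M \<Otimes>\<^sub>M M i" and f=fst and h=snd] assms(1)
    by (simp add: case_prod_beta')
  from measurable_comp[OF this assms(2)] show ?thesis by (simp add: comp_def case_prod_beta')
qed

lemma bounded_measurable_section:
  assumes "i \<notin> I" "bounded_measurable (PiM (insert i I) M) h B" "x \<in> space (PiM I M)"
  shows "bounded_measurable (M i) (\<lambda>y. h (x(i := y))) B"
  using measurable_Pair2[OF measurable_fun_upd_section[OF assms(1)] assms(3)] assms(2,3)
    fun_upd_in_space_PiM_insert[OF assms(3)]
  unfolding bounded_measurable_def by auto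

lemma bounded_measurable_section_integral:
  assumes "i \<notin> I" "bounded_measurable (PiM (insert i I) M) h B"
  shows "bounded_measurable (PiM I M) (\<lambda>x. \<integral>y. h (x(i := y)) \<partial>M i) B"
proof -
  interpret Mi: prob_space "M i" by (rule prob_space_factor)
  have "(\<lambda>x. \<integral>y. h (x(i := y)) \<partial>M i) \<in> borel_measurable (PiM I M)"
    using borel_measurable_lebesgue_integral[of "\<lambda>x y. h (x(i := y))"]
      measurable_fun_upd_section[of i I h] assms unfolding bounded_measurable_def by simp
  then show ?thesis
    using Mi.abs_expectation_le_bound[OF bounded_measurable_section[OF assms]] assms
    unfolding bounded_measurable_def by auto
qed

lemma integral_PiM_insert:
  assumes "finite I" "i \<notin> I" "bounded_measurable (PiM (insert i I) M) h B"
  shows "(\<integral>x. h x \<partial>PiM (insert i I) M) = (\<integral>x. \<integral>y. h (x(i := y)) \<partial>M i \<partial>PiM I M)"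
  using assms bounded_measurable_integrable[OF prob_space_PiM_factors[THEN prob_space.finite_measure]]
  by (intro product_integral_insert) auto

lemma variance_PiM_insert:
  assumes "finite I" "i \<notin> I" "bounded_measurable (PiM (insert i I) M) F B"
  shows "prob_space.variance (PiM (insert i I) M) F =
      (\<integral>x. prob_space.variance (M i) (\<lambda>y. F (x(i := y))) \<partial>PiM I M)
      + prob_space.variance (PiM I M) (\<lambda>x. \<integral>y. F (x(i := y)) \<partial>M i)"
proof -
  interpret Mi: prob_space "M i" by (rule prob_space_factor)
  interpret P: prob_space "PiM I M" by (rule prob_space_PiM_factors)
  interpret Q: prob_space "PiM (insert i I) M" by (rule prob_space_PiM_factors)
  define Fb where "Fb x = (\<integral>y. F (x(i := y)) \<partial>M i)" for x
  define F2b where "F2b x = (\<integral>y. (F (x(i := y)))\<^sup>2 \<partial>M i)" for x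
  note F2 = bounded_measurable_square[OF assms(3)]
  have Fb: "bounded_measurable (PiM I M) Fb B" and F2b: "bounded_measurable (PiM I M) F2b (B\<^sup>2)"
    unfolding Fb_def F2b_def using bounded_measurable_section_integral assms(2) assms(3) F2 by blast+
  have section_variance: "Mi.variance (\<lambda>y. F (x(i := y))) = F2b x - (Fb x)\<^sup>2"
    if "x \<in> space (PiM I M)" for x
    unfolding Fb_def F2b_def
    using bounded_measurable_section[OF assms(2) _ that] assms(3) F2
    by (intro Mi.variance_eq bounded_measurable_integrable[OF Mi.finite_measure_axioms]) blast+
  have integrable: "integrable (PiM I M) Fb" "integrable (PiM I M) (\<lambda>x. (Fb x)\<^sup>2)"
    "integrable (PiM I M) F2b"
    using bounded_measurable_integrable[OF P.finite_measure_axioms] Fb F2b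
      bounded_measurable_square[OF Fb] by blast+
  have "Q.variance F = (\<integral>x. (F x)\<^sup>2 \<partial>PiM (insert i I) M) - (\<integral>x. F x \<partial>PiM (insert i I) M)\<^sup>2"
    using assms(3) F2 by (intro Q.variance_eq bounded_measurable_integrable[OF Q.finite_measure_axioms])
  also have "\<dots> = P.expectation F2b - (P.expectation Fb)\<^sup>2"
    unfolding Fb_def F2b_def using assms F2 by (simp add: integral_PiM_insert)
  also have "\<dots> = (\<integral>x. F2b x - (Fb x)\<^sup>2 \<partial>PiM I M) + P.variance Fb"
    using integrable by (simp add: P.variance_eq)
  also have "\<dots> = (\<integral>x. Mi.variance (\<lambda>y. F (x(i := y))) \<partial>PiM I M) + P.variance Fb"
    using section_variance by (simp cong: Bochner_Integration.integral_cong)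
  finally show ?thesis unfolding Fb_def .
qed

lemma integral_variance_section_le:
  assumes "finite I" "i \<notin> I"
    and F: "bounded_measurable (PiM (insert i I) M) F B"
    and G: "bounded_measurable (PiM (insert i I) M) G B"
    and G_fun_upd: "\<And>x y. x \<in> space (PiM (insert i I) M) \<Longrightarrow> y \<in> space (M i) \<Longrightarrow> G (x(i := y)) = G x"
  shows "(\<integral>x. prob_space.variance (M i) (\<lambda>y. F (x(i := y))) \<partial>PiM I M)
      \<le> (\<integral>x. (F x - G x)\<^sup>2 \<partial>PiM (insert i I) M)"
proof -
  interpret Mi: prob_space "M i" by (rule prob_space_factor)
  interpret P: prob_space "PiM I M" by (rule prob_space_PiM_factors)
  note FG = bounded_measurable_diff_square[OF F G]
  have "(\<integral>x. Mi.variance (\<lambda>y. F (x(i := y))) \<partial>PiM I M)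
      \<le> (\<integral>x. \<integral>y. (F (x(i := y)) - G (x(i := y)))\<^sup>2 \<partial>M i \<partial>PiM I M)"
  proof (rule integral_mono')
    fix x assume x: "x \<in> space (PiM I M)"
    obtain y0 where y0: "y0 \<in> space (M i)" using Mi.not_empty by blast
    have "G (x(i := y)) = G (x(i := y0))" if "y \<in> space (M i)" for y
      using G_fun_upd[of "x(i := y0)" y] fun_upd_in_space_PiM_insert[OF x y0] that
      by (simp del: fun_upd_apply)
    then have "Mi.expectation (\<lambda>y. (F (x(i := y)) - G (x(i := y)))\<^sup>2)
        = Mi.expectation (\<lambda>y. (F (x(i := y)) - G (x(i := y0)))\<^sup>2)"
      by (intro Bochner_Integration.integral_cong) auto
    moreover note F_section = bounded_measurable_section[OF \<open>i \<notin> I\<close> F x]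
    ultimately show "Mi.variance (\<lambda>y. F (x(i := y)))
        \<le> Mi.expectation (\<lambda>y. (F (x(i := y)) - G (x(i := y)))\<^sup>2)"
      using F_section bounded_measurable_square[OF F_section]
      by (simp add: Mi.variance_le_square_deviation
          bounded_measurable_integrable[OF Mi.finite_measure_axioms])
  qed (use bounded_measurable_section_integral[OF \<open>i \<notin> I\<close> FG]
      bounded_measurable_integrable[OF P.finite_measure_axioms] in auto)
  also have "\<dots> = (\<integral>x. (F x - G x)\<^sup>2 \<partial>PiM (insert i I) M)"
    using integral_PiM_insert[OF assms(1,2) FG] ..
  finally show ?thesis .
qed

lemma integral_square_diff_section_integral_le:
  assumes "finite I" "i \<notin> I"
    and F: "bounded_measurable (PiM (insert i I) M) F B"
    and G: "bounded_measurable (PiM (insert i I) M) G B"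
  shows "(\<integral>x. ((\<integral>y. F (x(i := y)) \<partial>M i) - (\<integral>y. G (x(i := y)) \<partial>M i))\<^sup>2 \<partial>PiM I M)
      \<le> (\<integral>x. (F x - G x)\<^sup>2 \<partial>PiM (insert i I) M)"
proof -
  interpret Mi: prob_space "M i" by (rule prob_space_factor)
  interpret P: prob_space "PiM I M" by (rule prob_space_PiM_factors)
  note FG = bounded_measurable_diff_square[OF F G]
  have "(\<integral>x. ((\<integral>y. F (x(i := y)) \<partial>M i) - (\<integral>y. G (x(i := y)) \<partial>M i))\<^sup>2 \<partial>PiM I M)
      \<le> (\<integral>x. \<integral>y. (F (x(i := y)) - G (x(i := y)))\<^sup>2 \<partial>M i \<partial>PiM I M)"
  proof (rule integral_mono')
    fix x assume x: "x \<in> space (PiM I M)"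
    note F_section = bounded_measurable_section[OF \<open>i \<notin> I\<close> F x]
      and G_section = bounded_measurable_section[OF \<open>i \<notin> I\<close> G x]
    have "(\<integral>y. F (x(i := y)) \<partial>M i) - (\<integral>y. G (x(i := y)) \<partial>M i)
        = Mi.expectation (\<lambda>y. F (x(i := y)) - G (x(i := y)))"
      using F_section G_section
      by (intro Bochner_Integration.integral_diff[symmetric]
          bounded_measurable_integrable[OF Mi.finite_measure_axioms])
    then show "((\<integral>y. F (x(i := y)) \<partial>M i) - (\<integral>y. G (x(i := y)) \<partial>M i))\<^sup>2
        \<le> Mi.expectation (\<lambda>y. (F (x(i := y)) - G (x(i := y)))\<^sup>2)"
      using bounded_measurable_diff_square[OF F_section G_section]
        bounded_measurable_diff[OF F_section G_section]
      by (simp add: Mi.square_expectation_le bounded_measurable_integrable[OF Mi.finite_measure_axioms])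
  qed (use bounded_measurable_section_integral[OF \<open>i \<notin> I\<close> FG]
      bounded_measurable_integrable[OF P.finite_measure_axioms] in auto)
  also have "\<dots> = (\<integral>x. (F x - G x)\<^sup>2 \<partial>PiM (insert i I) M)"
    using integral_PiM_insert[OF assms(1,2) FG] ..
  finally show ?thesis .
qed

lemma section_integral_fun_upd:
  assumes "i \<notin> I" "j \<in> I" "x \<in> space (PiM I M)" "y \<in> space (M j)"
    and G_fun_upd: "\<And>x y. x \<in> space (PiM (insert i I) M) \<Longrightarrow> y \<in> space (M j) \<Longrightarrow> G (x(j := y)) = G x"
  shows "(\<integral>z. G ((x(j := y))(i := z)) \<partial>M i) = (\<integral>z. G (x(i := z)) \<partial>M i)"
proof (rule Bochner_Integration.integral_cong)
  fix z assume "z \<in> space (M i)"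
  moreover have "(x(j := y))(i := z) = (x(i := z))(j := y)"
    using assms(1,2) by (auto simp: fun_upd_twist)
  ultimately show "G ((x(j := y))(i := z)) = G (x(i := z))"
    using G_fun_upd[of "x(i := z)" y] fun_upd_in_space_PiM_insert[OF assms(3)] assms(4)
    by (simp del: fun_upd_apply)
qed simp

text \<open>Induction on I via the law of total variance: the conditional variance in the new coordinate
  i is bounded using G i, and the variance of the conditional mean by the induction hypothesis for
  the conditional means of F and of the G j.\<close>
theorem efron_stein:
  assumes "finite I" "bounded_measurable (PiM I M) F B"
    and "\<And>i. i \<in> I \<Longrightarrow> bounded_measurable (PiM I M) (G i) B"
    and "\<And>i x y. i \<in> I \<Longrightarrow> x \<in> space (PiM I M) \<Longrightarrow> y \<in> space (M i) \<Longrightarrow> G i (x(i := y)) = G i x"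
  shows "prob_space.variance (PiM I M) F \<le> (\<Sum>i\<in>I. \<integral>x. (F x - G i x)\<^sup>2 \<partial>PiM I M)"
  using assms
proof (induction I arbitrary: F G rule: finite_induct)
  case empty
  show ?case by (simp add: PiM_empty lebesgue_integral_count_space_finite)
next
  case (insert i I)
  let ?Q = "PiM (insert i I) M"
  define Fb where "Fb x = (\<integral>y. F (x(i := y)) \<partial>M i)" for x
  define Gb where "Gb j x = (\<integral>y. G j (x(i := y)) \<partial>M i)" for j x
  have F: "bounded_measurable ?Q F B" and G: "\<And>j. j \<in> insert i I \<Longrightarrow> bounded_measurable ?Q (G j) B"
    by fact+
  have "prob_space.variance (PiM I M) Fb \<le> (\<Sum>j\<in>I. \<integral>x. (Fb x - Gb j x)\<^sup>2 \<partial>PiM I M)"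
    unfolding Fb_def Gb_def
  proof (rule insert.IH)
    show "bounded_measurable (PiM I M) (\<lambda>x. \<integral>y. F (x(i := y)) \<partial>M i) B"
      by (rule bounded_measurable_section_integral[OF \<open>i \<notin> I\<close> F])
  next
    fix j assume "j \<in> I"
    then show "bounded_measurable (PiM I M) (\<lambda>x. \<integral>y. G j (x(i := y)) \<partial>M i) B"
      by (intro bounded_measurable_section_integral[OF \<open>i \<notin> I\<close> G]) simp
  next
    fix j x y assume "j \<in> I" "x \<in> space (PiM I M)" "y \<in> space (M j)"
    with insert.prems(3) show "(\<integral>z. G j ((x(j := y))(i := z)) \<partial>M i) = (\<integral>z. G j (x(i := z)) \<partial>M i)"
      using \<open>i \<notin> I\<close> by (intro section_integral_fun_upd) auto
  qed
  also have "\<dots> \<le> (\<Sum>j\<in>I. \<integral>x. (F x - G j x)\<^sup>2 \<partial>?Q)"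
    unfolding Fb_def Gb_def
    using integral_square_diff_section_integral_le[OF insert.hyps F G] by (intro sum_mono) auto
  finally have "prob_space.variance (PiM I M) Fb \<le> (\<Sum>j\<in>I. \<integral>x. (F x - G j x)\<^sup>2 \<partial>?Q)" .
  moreover have "(\<integral>x. prob_space.variance (M i) (\<lambda>y. F (x(i := y))) \<partial>PiM I M)
      \<le> (\<integral>x. (F x - G i x)\<^sup>2 \<partial>?Q)"
    using insert.prems(3)[of i]
    by (intro integral_variance_section_le[OF insert.hyps F G]) (auto simp del: fun_upd_apply)
  ultimately show ?case
    using variance_PiM_insert[OF insert.hyps F] insert.hyps unfolding Fb_def by simp
qed

end

section \<open>Voronoi cells and red crossings\<close>

definition voronoi_cell_on :: "'a set \<Rightarrow> 'i set \<Rightarrow> ('i \<Rightarrow> 'a::metric_space) \<Rightarrow> 'i \<Rightarrow> 'a set" where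
  "voronoi_cell_on R S eta u = {x \<in> R. \<forall>v\<in>S. dist (eta u) x \<le> dist (eta v) x}"

definition meets_only_red :: "'a set \<Rightarrow> 'a set \<Rightarrow> 'i set \<Rightarrow> ('i \<Rightarrow> 'a::metric_space) \<Rightarrow> ('i \<Rightarrow> int) \<Rightarrow> bool" where
  "meets_only_red R K S eta omega \<longleftrightarrow>
     (\<forall>u\<in>S. K \<inter> voronoi_cell_on R S eta u \<noteq> {} \<longrightarrow> omega u = 1)"

definition red_crossing ::
    "'a set \<Rightarrow> 'a set \<Rightarrow> 'a set \<Rightarrow> 'i set \<Rightarrow> ('i \<Rightarrow> 'a::metric_space) \<Rightarrow> ('i \<Rightarrow> int) \<Rightarrow> bool" where
  "red_crossing R A B S eta omega \<longleftrightarrow>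
     (\<exists>\<gamma>. path \<gamma> \<and> path_image \<gamma> \<subseteq> R \<and> pathstart \<gamma> \<in> A \<and> pathfinish \<gamma> \<in> B \<and>
        meets_only_red R (path_image \<gamma>) S eta omega)"

lemma crossing_eq_red_crossing:
  "crossing a b c d n eta omega =
     red_crossing (rect a b c d) ({a} \<times> {c..d}) ({b} \<times> {c..d}) {..<n} eta omega"
proof -
  have "voronoi_cell R n eta m = voronoi_cell_on R {..<n} eta m" for R m
    unfolding voronoi_cell_def voronoi_cell_on_def by (auto simp: dist_norm)
  then show ?thesis
    unfolding crossing_def red_crossing_def meets_only_red_def by (simp add: Ball_def)
qed

lemma voronoi_cell_on_antimono:
  "S \<subseteq> T \<Longrightarrow> voronoi_cell_on R T eta u \<subseteq> voronoi_cell_on R S eta u"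
  unfolding voronoi_cell_on_def by auto

lemma red_crossing_cong:
  assumes "\<And>u. u \<in> S \<Longrightarrow> eta u = eta' u" "\<And>u. u \<in> S \<Longrightarrow> omega u = omega' u"
  shows "red_crossing R A B S eta omega = red_crossing R A B S eta' omega'"
proof -
  have "voronoi_cell_on R S eta u = voronoi_cell_on R S eta' u" if "u \<in> S" for u
    using assms(1) that unfolding voronoi_cell_on_def by auto
  then show ?thesis
    using assms(2) unfolding red_crossing_def meets_only_red_def by simp
qed

lemma meets_only_red_insert_red:
  assumes "omega m = 1" "meets_only_red R K (S - {m}) eta omega"
  shows "meets_only_red R K S eta omega"
  using assms voronoi_cell_on_antimono[of "S - {m}" S R eta]
  unfolding meets_only_red_def by blast

lemma meets_only_red_remove_blue:
  assumes "m \<in> S" "omega m \<noteq> 1" "meets_only_red R K S eta omega"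
  shows "meets_only_red R K (S - {m}) eta omega"
  unfolding meets_only_red_def
proof (intro ballI impI)
  fix u assume u: "u \<in> S - {m}" and "K \<inter> voronoi_cell_on R (S - {m}) eta u \<noteq> {}"
  then obtain x where x: "x \<in> K" "x \<in> voronoi_cell_on R (S - {m}) eta u" by blast
  have "x \<notin> voronoi_cell_on R S eta m"
    using assms x(1) unfolding meets_only_red_def by blast
  moreover have "x \<in> R" using x(2) unfolding voronoi_cell_on_def by simp
  ultimately obtain v where v: "v \<in> S" "dist (eta v) x < dist (eta m) x"
    unfolding voronoi_cell_on_def by (auto simp: not_le)
  have u_closest: "\<forall>w\<in>S - {m}. dist (eta u) x \<le> dist (eta w) x"
    using x(2) unfolding voronoi_cell_on_def by simp
  moreover have "v \<in> S - {m}" using v by auto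
  ultimately have "dist (eta u) x \<le> dist (eta v) x" by blast
  then have "dist (eta u) x \<le> dist (eta m) x" using v(2) by linarith
  then have "dist (eta u) x \<le> dist (eta w) x" if "w \<in> S" for w
    using u_closest that by (cases "w = m") auto
  then have "x \<in> voronoi_cell_on R S eta u"
    using \<open>x \<in> R\<close> unfolding voronoi_cell_on_def by simp
  then show "omega u = 1"
    using x(1) u assms(3) unfolding meets_only_red_def by blast
qed

lemma red_crossing_insert_red:
  assumes "omega m = 1" "red_crossing R A B (S - {m}) eta omega"
  shows "red_crossing R A B S eta omega"
  using assms(2) meets_only_red_insert_red[where omega=omega and m=m, OF assms(1)]
  unfolding red_crossing_def by meson

lemma red_crossing_remove_blue:
  assumes "m \<in> S" "omega m \<noteq> 1" "red_crossing R A B S eta omega"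
  shows "red_crossing R A B (S - {m}) eta omega"
  using assms(3) meets_only_red_remove_blue[where omega=omega and m=m and S=S, OF assms(1,2)]
  unfolding red_crossing_def by meson

text \<open>A compact set missing the closed cell of u keeps a positive margin from it, measured by
  the total excess of the distance to eta u over the distances to the other points.\<close>
lemma voronoi_cell_on_disjoint_stable:
  assumes "compact K" "K \<subseteq> R" "finite S" "u \<in> S" "K \<inter> voronoi_cell_on R S eta u = {}"
  shows "\<exists>e>0. \<forall>eta'. (\<forall>i\<in>S. dist (eta' i) (eta i) < e) \<longrightarrow> K \<inter> voronoi_cell_on R S eta' u = {}"
proof (cases "K = {}")
  case False
  define h where "h x = (\<Sum>v\<in>S. max 0 (dist (eta u) x - dist (eta v) x))" for x
  have h_pos: "0 < h x" if "x \<in> K" for x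
  proof -
    have "x \<notin> voronoi_cell_on R S eta u" "x \<in> R" using assms(2,5) that by blast+
    then obtain v where v: "v \<in> S" "dist (eta v) x < dist (eta u) x"
      unfolding voronoi_cell_on_def by (auto simp: not_le)
    then have "0 < max 0 (dist (eta u) x - dist (eta v) x)" by simp
    also have "\<dots> \<le> h x"
      unfolding h_def by (rule member_le_sum[OF v(1) _ assms(3)]) simp
    finally show ?thesis .
  qed
  have "continuous_on K h"
    unfolding h_def by (intro continuous_intros)
  then obtain x0 where x0: "x0 \<in> K" "\<And>x. x \<in> K \<Longrightarrow> h x0 \<le> h x"
    using continuous_attains_inf[OF assms(1) False] by blast
  define e where "e = h x0 / (4 * card S)"
  have "card S > 0" using assms(3,4) card_gt_0_iff by blast
  then have e: "e > 0" "2 * e * card S < h x0"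
    using h_pos[OF x0(1)] unfolding e_def by (auto simp: field_simps)
  have "K \<inter> voronoi_cell_on R S eta' u = {}" if close: "\<forall>i\<in>S. dist (eta' i) (eta i) < e" for eta'
  proof (rule ccontr)
    assume "K \<inter> voronoi_cell_on R S eta' u \<noteq> {}"
    then obtain x where x: "x \<in> K" "x \<in> voronoi_cell_on R S eta' u" by blast
    have moved: "\<bar>dist (eta' i) x - dist (eta i) x\<bar> < e" if "i \<in> S" for i
      using abs_dist_diff_le[of "eta' i" x "eta i"] close that
      by (metis dist_commute order_le_less_trans)
    have "max 0 (dist (eta u) x - dist (eta v) x) \<le> 2 * e" if "v \<in> S" for v
      using moved[OF that] moved[OF assms(4)] x(2) that unfolding voronoi_cell_on_def by force
    then have "h x \<le> 2 * e * card S"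
      unfolding h_def using sum_mono[of S _ "\<lambda>_. 2 * e"] by (simp add: mult.commute)
    then show False using e(2) x0(2)[OF x(1)] by linarith
  qed
  then show ?thesis using e(1) by blast
qed (auto intro: exI[of _ 1])

lemma meets_only_red_stable:
  assumes "compact K" "K \<subseteq> R" "finite S" "meets_only_red R K S eta omega"
  shows "\<exists>e>0. \<forall>eta'. (\<forall>i\<in>S. dist (eta' i) (eta i) < e) \<longrightarrow> meets_only_red R K S eta' omega"
proof -
  let ?blue = "{u\<in>S. omega u \<noteq> 1}"
  have "\<forall>u\<in>?blue. \<exists>e>0. \<forall>eta'. (\<forall>i\<in>S. dist (eta' i) (eta i) < e) \<longrightarrow>
      K \<inter> voronoi_cell_on R S eta' u = {}"
    using assms by (intro ballI voronoi_cell_on_disjoint_stable) (auto simp: meets_only_red_def)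
  then obtain E where E: "\<forall>u\<in>?blue. E u > 0 \<and> (\<forall>eta'. (\<forall>i\<in>S. dist (eta' i) (eta i) < E u) \<longrightarrow>
      K \<inter> voronoi_cell_on R S eta' u = {})"
    by (metis (lifting) bchoice)
  define e where "e = Min (insert 1 (E ` ?blue))"
  have "finite ?blue" using assms(3) by simp
  then have "e > 0" and e_le: "\<And>u. u \<in> ?blue \<Longrightarrow> e \<le> E u"
    unfolding e_def using E by auto
  moreover have "meets_only_red R K S eta' omega" if close: "\<forall>i\<in>S. dist (eta' i) (eta i) < e" for eta'
    unfolding meets_only_red_def
  proof (intro ballI impI)
    fix u assume "u \<in> S" "K \<inter> voronoi_cell_on R S eta' u \<noteq> {}"
    moreover have "\<forall>i\<in>S. dist (eta' i) (eta i) < E u" if "u \<in> ?blue"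
      using close e_le[OF that] by fastforce
    ultimately show "omega u = 1" using E by blast
  qed
  ultimately show ?thesis by blast
qed

lemma red_crossing_stable:
  assumes "finite S" "red_crossing R A B S eta omega"
  shows "\<exists>e>0. \<forall>eta'. (\<forall>i\<in>S. dist (eta' i) (eta i) < e) \<longrightarrow> red_crossing R A B S eta' omega"
proof -
  obtain \<gamma> where \<gamma>: "path \<gamma>" "path_image \<gamma> \<subseteq> R" "pathstart \<gamma> \<in> A" "pathfinish \<gamma> \<in> B"
    "meets_only_red R (path_image \<gamma>) S eta omega"
    using assms(2) unfolding red_crossing_def by blast
  from meets_only_red_stable[OF compact_path_image[OF \<gamma>(1)] \<gamma>(2) assms(1) \<gamma>(5)]
  show ?thesis unfolding red_crossing_def using \<gamma>(1-4) by blast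
qed

section \<open>Measurability of crossing events\<close>

lemma sets_PiM_dist_less:
  fixes q :: "'i \<Rightarrow> 'a::{metric_space, second_countable_topology}"
  assumes "finite I" "\<And>i. i \<in> I \<Longrightarrow> sets (M i) = sets borel"
  shows "{eta\<in>space (PiM I M). \<forall>i\<in>I. dist (eta i) (q i) < r} \<in> sets (PiM I M)"
proof -
  have "Measurable.pred (PiM I M) (\<lambda>eta. \<forall>i\<in>I. dist (eta i) (q i) < r)"
  proof (intro pred_intros_finite[OF assms(1)])
    fix i assume i: "i \<in> I"
    have "(\<lambda>eta. eta i) \<in> borel_measurable (PiM I M)"
      using measurable_component_singleton[OF i, of M] assms(2)[OF i]
      by (simp add: measurable_def)
    then show "Measurable.pred (PiM I M) (\<lambda>eta. dist (eta i) (q i) < r)" by measurable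
  qed
  then show ?thesis unfolding pred_def .
qed

lemma box_with_dense_centre:
  fixes eta :: "'i \<Rightarrow> 'a::metric_space"
  assumes D: "\<And>X. open X \<Longrightarrow> X \<noteq> {} \<Longrightarrow> \<exists>d\<in>D. d \<in> X" and "e > 0"
  obtains q k where "q \<in> PiE I (\<lambda>_. D)" "\<forall>i\<in>I. dist (eta i) (q i) < 1 / Suc k"
    "\<And>eta'. \<forall>i\<in>I. dist (eta' i) (q i) < 1 / Suc k \<Longrightarrow> \<forall>i\<in>I. dist (eta' i) (eta i) < e"
proof -
  obtain k :: nat where k: "2 / Suc k < e"
    using reals_Archimedean[of "e / 2"] \<open>e > 0\<close> by (auto simp: field_simps)
  have "\<exists>d\<in>D. dist (eta i) d < 1 / Suc k" for i
    using D[of "ball (eta i) (1 / Suc k)"] by auto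
  then obtain f where f: "\<And>i. f i \<in> D \<and> dist (eta i) (f i) < 1 / Suc k" by metis
  have "\<forall>i\<in>I. dist (eta' i) (eta i) < e" if "\<forall>i\<in>I. dist (eta' i) (restrict f I i) < 1 / Suc k" for eta'
  proof
    fix i assume "i \<in> I"
    have "dist (eta' i) (eta i) \<le> dist (eta' i) (f i) + dist (eta i) (f i)"
      by (rule dist_triangle2)
    also have "\<dots> < 2 / Suc k"
      using that f[of i] \<open>i \<in> I\<close> by auto
    finally show "dist (eta' i) (eta i) < e" using k by linarith
  qed
  moreover have "restrict f I \<in> PiE I (\<lambda>_. D)" "\<forall>i\<in>I. dist (eta i) (restrict f I i) < 1 / Suc k"
    using f by auto
  ultimately show ?thesis using that by blast
qed

text \<open>Such a set is the countable union of the boxes it contains whose centres lie in a countable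
  dense set and whose radii are of the form 1 / (k + 1).\<close>
lemma sets_PiM_of_open:
  fixes Q :: "('i \<Rightarrow> 'a::{metric_space, second_countable_topology}) \<Rightarrow> bool"
  assumes "finite I" "\<And>i. i \<in> I \<Longrightarrow> sets (M i) = sets borel"
    and open_Q: "\<And>eta. eta \<in> space (PiM I M) \<Longrightarrow> Q eta \<Longrightarrow>
      \<exists>e>0. \<forall>eta'\<in>space (PiM I M). (\<forall>i\<in>I. dist (eta' i) (eta i) < e) \<longrightarrow> Q eta'"
  shows "{eta\<in>space (PiM I M). Q eta} \<in> sets (PiM I M)"
proof -
  obtain D :: "'a set" where D: "countable D" "\<And>X. open X \<Longrightarrow> X \<noteq> {} \<Longrightarrow> \<exists>d\<in>D. d \<in> X"
    by (erule countable_dense_setE)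
  define box where "box q k = {eta\<in>space (PiM I M). \<forall>i\<in>I. dist (eta i) (q i) < 1 / Suc k}"
    for q :: "'i \<Rightarrow> 'a" and k :: nat
  define Idx where "Idx = {(q, k). q \<in> PiE I (\<lambda>_. D) \<and> box q k \<subseteq> {eta\<in>space (PiM I M). Q eta}}"
  have "\<exists>p\<in>Idx. eta \<in> box (fst p) (snd p)" if eta: "eta \<in> space (PiM I M)" "Q eta" for eta
  proof -
    obtain e where e: "e > 0" "\<forall>eta'\<in>space (PiM I M). (\<forall>i\<in>I. dist (eta' i) (eta i) < e) \<longrightarrow> Q eta'"
      using open_Q[OF eta] by blast
    obtain q k where q: "q \<in> PiE I (\<lambda>_. D)" "\<forall>i\<in>I. dist (eta i) (q i) < 1 / Suc k"
      and close: "\<And>eta'. \<forall>i\<in>I. dist (eta' i) (q i) < 1 / Suc k \<Longrightarrow> \<forall>i\<in>I. dist (eta' i) (eta i) < e"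
      using box_with_dense_centre[OF D(2) e(1), where I=I and eta=eta] by blast
    have "box q k \<subseteq> {eta\<in>space (PiM I M). Q eta}"
      using close e(2) unfolding box_def by blast
    moreover have "eta \<in> box q k" using q(2) eta(1) unfolding box_def by blast
    ultimately show ?thesis using q(1) unfolding Idx_def by force
  qed
  then have "{eta\<in>space (PiM I M). Q eta} = (\<Union>p\<in>Idx. box (fst p) (snd p))"
    unfolding Idx_def by auto
  moreover have "countable Idx"
    by (rule countable_subset[of _ "PiE I (\<lambda>_. D) \<times> UNIV"])
      (auto simp: Idx_def intro!: countable_SIGMA countable_PiE assms(1) D(1))
  moreover have "box q k \<in> sets (PiM I M)" for q k
    unfolding box_def by (rule sets_PiM_dist_less[OF assms(1,2)])
  ultimately show ?thesis by (auto intro: sets.countable_UN')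
qed

lemma prob_space_uniform_rect:
  assumes "a < b" "c < d"
  shows "prob_space (uniform_measure lborel (rect a b c d))"
proof -
  have "emeasure lborel (rect a b c d) = emeasure (lborel \<Otimes>\<^sub>M lborel) ({a..b} \<times> {c..d})"
    unfolding rect_def by (simp add: lborel_prod)
  also have "\<dots> = ennreal ((b - a) * (d - c))"
    using assms by (simp add: lborel.emeasure_pair_measure_Times ennreal_mult)
  finally show ?thesis
    using assms by (intro prob_space_uniform_measure) (auto simp: rect_def)
qed

lemma pred_red_crossing:
  assumes "S \<subseteq> {..<n}"
  shows "Measurable.pred (point_measure a b c d n) (\<lambda>eta. red_crossing R A B S eta omega)"
  unfolding pred_def point_measure_def
proof (rule sets_PiM_of_open)
  fix eta assume "red_crossing R A B S eta omega"
  with red_crossing_stable[OF finite_subset[OF assms finite_lessThan]] obtain e where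
    "e > 0" "\<forall>eta'. (\<forall>i\<in>S. dist (eta' i) (eta i) < e) \<longrightarrow> red_crossing R A B S eta' omega"
    by blast
  then show "\<exists>e>0. \<forall>eta'\<in>space (PiM {..<n} (\<lambda>_. uniform_measure lborel (rect a b c d))).
      (\<forall>i\<in>{..<n}. dist (eta' i) (eta i) < e) \<longrightarrow> red_crossing R A B S eta' omega"
    using assms by blast
qed auto

section \<open>Deleting a point\<close>

lemma finite_colourings: "finite (colourings n)"
  unfolding colourings_def by (intro finite_PiE) auto

lemma colourings_nonempty: "colourings n \<noteq> {}"
  unfolding colourings_def by (simp add: PiE_eq_empty_iff)

lemma flip_in_colourings: "m < n \<Longrightarrow> omega \<in> colourings n \<Longrightarrow> flip m omega \<in> colourings n"
  unfolding colourings_def flip_def by (auto simp: PiE_def extensional_def Pi_def)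

lemma flip_flip [simp]: "flip m (flip m omega) = omega"
  unfolding flip_def by simp

lemma sum_diff_le_card_involution:
  fixes f g :: "'a \<Rightarrow> real"
  assumes "finite C" "\<And>x. x \<in> C \<Longrightarrow> \<sigma> x \<in> C" "\<And>x. x \<in> C \<Longrightarrow> \<sigma> (\<sigma> x) = x"
    and close: "\<And>x. x \<in> C \<Longrightarrow>
      \<bar>f x + f (\<sigma> x) - 2 * g x\<bar> \<le> (if f x \<noteq> f (\<sigma> x) then 1 else 0)"
  shows "2 * \<bar>(\<Sum>x\<in>C. f x) - (\<Sum>x\<in>C. g x)\<bar> \<le> card {x\<in>C. f x \<noteq> f (\<sigma> x)}"
proof -
  have "(\<Sum>x\<in>C. f (\<sigma> x)) = (\<Sum>x\<in>C. f x)"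
    using assms(2,3) by (intro sum.reindex_bij_witness[of _ \<sigma> \<sigma>]) auto
  then have pair_sum:
      "(\<Sum>x\<in>C. f x + f (\<sigma> x) - 2 * g x) = 2 * ((\<Sum>x\<in>C. f x) - (\<Sum>x\<in>C. g x))"
    by (simp add: sum.distrib sum_subtractf sum_distrib_left[symmetric])
  have "2 * \<bar>(\<Sum>x\<in>C. f x) - (\<Sum>x\<in>C. g x)\<bar> = \<bar>\<Sum>x\<in>C. f x + f (\<sigma> x) - 2 * g x\<bar>"
    unfolding pair_sum by (simp only: abs_mult abs_numeral)
  also have "\<dots> \<le> (\<Sum>x\<in>C. if f x \<noteq> f (\<sigma> x) then 1 else 0)"
    using close by (intro order.trans[OF sum_abs] sum_mono) auto
  also have "\<dots> = card {x\<in>C. f x \<noteq> f (\<sigma> x)}"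
    using assms(1) by (simp add: sum.If_cases Int_def conj_commute)
  finally show ?thesis .
qed

lemma red_crossing_flip_cong:
  "red_crossing R A B (S - {m}) eta (flip m omega) = red_crossing R A B (S - {m}) eta omega"
  by (rule red_crossing_cong) (auto simp: flip_def)

lemma red_crossing_delete_between:
  assumes "m \<in> S" "omega m \<in> {-1, 1}"
  shows "red_crossing R A B S eta omega \<and> red_crossing R A B S eta (flip m omega)
      \<longrightarrow> red_crossing R A B (S - {m}) eta omega" (is ?both)
    and "red_crossing R A B (S - {m}) eta omega
      \<longrightarrow> red_crossing R A B S eta omega \<or> red_crossing R A B S eta (flip m omega)" (is ?one)
proof -
  have "flip m omega m = - omega m" by (simp add: flip_def)
  with assms(2) consider "omega m = 1" "flip m omega m \<noteq> 1" | "omega m \<noteq> 1" "flip m omega m = 1"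
    by fastforce
  then show ?both and ?one
    using red_crossing_remove_blue[OF assms(1)] red_crossing_insert_red red_crossing_flip_cong
    by metis+
qed

definition crossing_without ::
    "real \<Rightarrow> real \<Rightarrow> real \<Rightarrow> real \<Rightarrow> nat \<Rightarrow> nat \<Rightarrow> (nat \<Rightarrow> point) \<Rightarrow> (nat \<Rightarrow> int) \<Rightarrow> bool" where
  "crossing_without a b c d n m eta omega =
     red_crossing (rect a b c d) ({a} \<times> {c..d}) ({b} \<times> {c..d}) ({..<n} - {m}) eta omega"

definition cond_prob_H_without ::
    "real \<Rightarrow> real \<Rightarrow> real \<Rightarrow> real \<Rightarrow> nat \<Rightarrow> nat \<Rightarrow> (nat \<Rightarrow> point) \<Rightarrow> real" where
  "cond_prob_H_without a b c d n m eta =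
     (\<Sum>omega\<in>colourings n. if crossing_without a b c d n m eta omega then 1 else 0)
     / real (card (colourings n))"

lemma abs_cond_prob_H_diff_without_le:
  assumes "m < n"
  shows "\<bar>cond_prob_H a b c d n eta - cond_prob_H_without a b c d n m eta\<bar>
    \<le> influence a b c d n m eta / 2"
proof -
  let ?C = "colourings n" and ?f = "fR a b c d n eta"
  let ?g = "\<lambda>omega. if crossing_without a b c d n m eta omega then 1 else 0 :: real"
  have "\<bar>?f omega + ?f (flip m omega) - 2 * ?g omega\<bar>
      \<le> (if ?f omega \<noteq> ?f (flip m omega) then 1 else 0)" if "omega \<in> ?C" for omega
  proof -
    have "omega m \<in> {-1, 1}" using that assms unfolding colourings_def by auto
    from red_crossing_delete_between[where m=m and S="{..<n}" and omega=omega, OF _ this] assms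
    have "crossing a b c d n eta omega \<and> crossing a b c d n eta (flip m omega)
        \<longrightarrow> crossing_without a b c d n m eta omega"
      "crossing_without a b c d n m eta omega
        \<longrightarrow> crossing a b c d n eta omega \<or> crossing a b c d n eta (flip m omega)"
      unfolding crossing_eq_red_crossing crossing_without_def by blast+
    then show ?thesis unfolding fR_def by auto
  qed
  then have "2 * \<bar>sum ?f ?C - sum ?g ?C\<bar> \<le> card {omega\<in>?C. ?f omega \<noteq> ?f (flip m omega)}"
    using assms by (intro sum_diff_le_card_involution finite_colourings flip_in_colourings) auto
  moreover have "real (card ?C) > 0"
    using finite_colourings colourings_nonempty by (simp add: card_gt_0_iff)
  ultimately show ?thesis
    unfolding cond_prob_H_def cond_prob_H_without_def influence_def
    by (simp add: diff_divide_distrib[symmetric] abs_divide field_simps)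
qed

lemma bounded_measurable_average:
  assumes "finite C" "C \<noteq> {}" "\<And>omega. omega \<in> C \<Longrightarrow> Measurable.pred M (P omega)"
  shows "bounded_measurable M (\<lambda>eta. (\<Sum>omega\<in>C. if P omega eta then 1 else 0) / real (card C)) 1"
proof -
  have "(\<Sum>omega\<in>C. if P omega eta then 1 else 0) \<le> real (card C)" for eta
    using sum_mono[of C "\<lambda>omega. if P omega eta then 1 else 0" "\<lambda>_. 1 :: real"] by auto
  moreover have "0 \<le> (\<Sum>omega\<in>C. if P omega eta then 1 else 0 :: real)" for eta
    by (intro sum_nonneg) auto
  ultimately show ?thesis
    using assms unfolding bounded_measurable_def
    by (auto simp: card_gt_0_iff intro!: borel_measurable_divide borel_measurable_sum measurable_If)
qed

lemma pred_crossing: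
  "Measurable.pred (point_measure a b c d n) (\<lambda>eta. crossing a b c d n eta omega)"
  unfolding crossing_eq_red_crossing by (rule pred_red_crossing) simp

lemma bounded_measurable_cond_prob_H:
  "bounded_measurable (point_measure a b c d n) (cond_prob_H a b c d n) 1"
  unfolding cond_prob_H_def fR_def
  by (intro bounded_measurable_average finite_colourings colourings_nonempty pred_crossing)

lemma bounded_measurable_cond_prob_H_without:
  "bounded_measurable (point_measure a b c d n) (cond_prob_H_without a b c d n m) 1"
  unfolding cond_prob_H_without_def crossing_without_def
  by (intro bounded_measurable_average finite_colourings colourings_nonempty pred_red_crossing) auto

lemma bounded_measurable_influence:
  "bounded_measurable (point_measure a b c d n) (influence a b c d n m) 1"
proof -
  have "influence a b c d n m = (\<lambda>eta.
      (\<Sum>omega\<in>colourings n.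
        if crossing a b c d n eta omega \<noteq> crossing a b c d n eta (flip m omega) then 1 else 0)
      / real (card (colourings n)))"
    unfolding influence_def fR_def using finite_colourings
    by (auto simp: sum.If_cases Int_def conj_commute intro!: arg_cong[where f = card])
  then show ?thesis
    using pred_crossing
    by (simp only:) (intro bounded_measurable_average finite_colourings colourings_nonempty; measurable)
qed

lemma cond_prob_H_without_fun_upd [simp]:
  "cond_prob_H_without a b c d n m (eta(m := y)) = cond_prob_H_without a b c d n m eta"
proof -
  have "crossing_without a b c d n m (eta(m := y)) omega = crossing_without a b c d n m eta omega"
    for omega
    unfolding crossing_without_def by (rule red_crossing_cong) auto
  then show ?thesis unfolding cond_prob_H_without_def by simp
qed

lemma square_cond_prob_H_diff_without_le:
  assumes "m < n"
  shows "(cond_prob_H a b c d n eta - cond_prob_H_without a b c d n m eta)\<^sup>2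
    \<le> (influence a b c d n m eta)\<^sup>2"
proof -
  have "0 \<le> influence a b c d n m eta" unfolding influence_def by simp
  with abs_cond_prob_H_diff_without_le[OF assms, where a=a and b=b and c=c and d=d and eta=eta]
  have "\<bar>cond_prob_H a b c d n eta - cond_prob_H_without a b c d n m eta\<bar>
      \<le> \<bar>influence a b c d n m eta\<bar>"
    by linarith
  then show ?thesis by (simp add: abs_le_square_iff)
qed

theorem theorem2p1:
  fixes a b c d :: real and n :: nat
  assumes "a < b" and "c < d"
  shows "prob_space.variance (point_measure a b c d n) (cond_prob_H a b c d n)
           \<le> (\<Sum>m<n. prob_space.expectation (point_measure a b c d n)
                          (\<lambda>eta. (influence a b c d n m eta)\<^sup>2))"
proof -
  let ?F = "cond_prob_H a b c d n" and ?G = "cond_prob_H_without a b c d n"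
  interpret P: prob_space "point_measure a b c d n"
    unfolding point_measure_def using prob_space_uniform_rect[OF assms] by (rule prob_space_PiM)
  have "P.variance ?F \<le> (\<Sum>m<n. P.expectation (\<lambda>eta. (?F eta - ?G m eta)\<^sup>2))"
    using prob_space_uniform_rect[OF assms] bounded_measurable_cond_prob_H
      bounded_measurable_cond_prob_H_without
    unfolding point_measure_def by (intro efron_stein) auto
  also have "\<dots> \<le> (\<Sum>m<n. P.expectation (\<lambda>eta. (influence a b c d n m eta)\<^sup>2))"
    using square_cond_prob_H_diff_without_le
      bounded_measurable_integrable[OF P.finite_measure_axioms bounded_measurable_diff_square[OF
        bounded_measurable_cond_prob_H bounded_measurable_cond_prob_H_without]]
      bounded_measurable_integrable[OF P.finite_measure_axioms
        bounded_measurable_square[OF bounded_measurable_influence]]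
    by (intro sum_mono integral_mono) auto
  finally show ?thesis .
qed

end
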